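(* For every ensemble $\mathcal{E}=\{\eta_{i},\rho_{i}\}_{i\in\mathbb{N}_{n}}$, $p_{\sf G}(\mathcal{E})=q_{\sf G}(\mathcal{E})$.
   Context: $\mathbb{N}_{n}=\{1,\ldots,n\}$. $\mathcal{H}$ is a finite-dimensional complex Hilbert space, $\mathbb{H}$ the Hermitian operators on it, $\mathbb{H}_{+}$ the positive-semidefinite ones, $\mathbbm{1}$ the identity. An ensemble $\mathcal{E}=\{\eta_{i},\rho_{i}\}_{i\in\mathbb{N}_{n}}$: density operators $\rho_i$ with probabilities $\eta_i>0$, $\sum_i\eta_i=1$; $\rho_0=\sum_i\eta_i\rho_i$. A measurement is $\{M_{?}\}\cup\{M_{i}\}_{i\in\mathbb{N}_{n}}\subseteq\mathbb{H}_+$ with $M_?+\sum_iM_i=\mathbbm{1}$. $\mathcal{C}_{x}(\mathcal{E})$ is the maximum of $\eta_{x}\Tr(\rho_{x}M_{x})/\Tr(\rho_{0}M_{x})$ over measurements with $\Tr(\rho_{0}M_{x})>0$. $\mathbb{M}_{i}(\mathcal{E})=\{E\in\mathbb{H}_{+}\mid\Tr[(\mathcal{C}_{i}(\mathcal{E})\rho_{0}-\eta_{i}\rho_{i})E]=0\}$ and $\mathbb{M}_{i}^{*}(\mathcal{E})=\{E\in\mathbb{H}\mid\Tr(EF)\ge0\ \forall F\in\mathbb{M}_{i}(\mathcal{E})\}$. $\mathbb{M}(\mathcal{E})$ is the set of measurements with $M_i\in\mathbb{M}_i(\mathcal{E})$ for all $i$. $p_{\sf G}(\mathcal{E})=\max_{\mathcal{M}\in\mathbb{M}(\mathcal{E})}\sum_{i}\eta_{i}\Tr(\rho_{i}M_{i})$.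 $\mathbb{H}(\mathcal{E})=\{H\in\mathbb{H}_{+}\mid H-\eta_{i}\rho_{i}\in\mathbb{M}_{i}^{*}(\mathcal{E})\ \forall i\}$ and $q_{\sf G}(\mathcal{E})=\min_{H\in\mathbb{H}(\mathcal{E})}\Tr H$. *)

theory Defs
  imports "HOL-Analysis.Analysis"
begin

type_synonym 'd op = "complex^'d^'d"

definition adj :: "'d::finite op \<Rightarrow> 'd op" where
  "adj A = (\<chi> i j. cnj (A $ j $ i))"

definition hermitian :: "'d::finite op \<Rightarrow> bool" where
  "hermitian A \<longleftrightarrow> adj A = A"

definition psd :: "'d::finite op \<Rightarrow> bool" where
  "psd A \<longleftrightarrow> hermitian A \<and>
     (\<forall>v::complex^'d. let q = (\<Sum>i\<in>UNIV. cnj (v $ i) * (A *v v) $ i) in Im q = 0 \<and> Re q \<ge> 0)"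

definition tr :: "'d::finite op \<Rightarrow> complex" where
  "tr A = (\<Sum>i\<in>UNIV. A $ i $ i)"

definition density :: "'d::finite op \<Rightarrow> bool" where
  "density \<rho> \<longleftrightarrow> psd \<rho> \<and> tr \<rho> = 1"

definition ensemble :: "nat \<Rightarrow> (nat \<Rightarrow> real) \<Rightarrow> (nat \<Rightarrow> 'd::finite op) \<Rightarrow> bool" where
  "ensemble n \<eta> \<rho> \<longleftrightarrow> n \<ge> 1 \<and> (\<forall>i\<in>{1..n}. \<eta> i > 0 \<and> density (\<rho> i)) \<and> (\<Sum>i=1..n. \<eta> i) = 1"

definition rho0 :: "nat \<Rightarrow> (nat \<Rightarrow> real) \<Rightarrow> (nat \<Rightarrow> 'd::finite op) \<Rightarrow> 'd op" where
  "rho0 n \<eta> \<rho> = (\<Sum>i=1..n. \<eta> i *\<^sub>R \<rho> i)"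

text \<open>A measurement {M_?} \<union> {M_i}: Mq is M_?, M i is M_i for i in {1..n}.\<close>
definition measurement :: "nat \<Rightarrow> 'd::finite op \<Rightarrow> (nat \<Rightarrow> 'd op) \<Rightarrow> bool" where
  "measurement n Mq M \<longleftrightarrow> psd Mq \<and> (\<forall>i\<in>{1..n}. psd (M i)) \<and> Mq + (\<Sum>i=1..n. M i) = mat 1"

definition C :: "nat \<Rightarrow> (nat \<Rightarrow> real) \<Rightarrow> (nat \<Rightarrow> 'd::finite op) \<Rightarrow> nat \<Rightarrow> real" where
  "C n \<eta> \<rho> x = Sup {\<eta> x * Re (tr (\<rho> x ** M x)) / Re (tr (rho0 n \<eta> \<rho> ** M x)) | Mq M.
      measurement n Mq M \<and> Re (tr (rho0 n \<eta> \<rho> ** M x)) > 0}"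

definition Mset :: "nat \<Rightarrow> (nat \<Rightarrow> real) \<Rightarrow> (nat \<Rightarrow> 'd::finite op) \<Rightarrow> nat \<Rightarrow> 'd op set" where
  "Mset n \<eta> \<rho> i = {E. psd E \<and>
     tr ((C n \<eta> \<rho> i *\<^sub>R rho0 n \<eta> \<rho> - \<eta> i *\<^sub>R \<rho> i) ** E) = 0}"

definition Mdual :: "nat \<Rightarrow> (nat \<Rightarrow> real) \<Rightarrow> (nat \<Rightarrow> 'd::finite op) \<Rightarrow> nat \<Rightarrow> 'd op set" where
  "Mdual n \<eta> \<rho> i = {E. hermitian E \<and> (\<forall>F\<in>Mset n \<eta> \<rho> i. Re (tr (E ** F)) \<ge> 0)}"

definition pG :: "nat \<Rightarrow> (nat \<Rightarrow> real) \<Rightarrow> (nat \<Rightarrow> 'd::finite op) \<Rightarrow> real" where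
  "pG n \<eta> \<rho> = Sup {(\<Sum>i=1..n. \<eta> i * Re (tr (\<rho> i ** M i))) | Mq M.
      measurement n Mq M \<and> (\<forall>i\<in>{1..n}. M i \<in> Mset n \<eta> \<rho> i)}"

definition qG :: "nat \<Rightarrow> (nat \<Rightarrow> real) \<Rightarrow> (nat \<Rightarrow> 'd::finite op) \<Rightarrow> real" where
  "qG n \<eta> \<rho> = Inf {Re (tr H) | H. psd H \<and>
      (\<forall>i\<in>{1..n}. H - \<eta> i *\<^sub>R \<rho> i \<in> Mdual n \<eta> \<rho> i)}"

end

(* Weak duality is the trace inequality Re tr (A B) >= 0 for positive semidefinite A and B, which
   holds because B is a sum of rank-one matrices v v^* (split off one row and column at a time, as in
   a Cholesky factorisation).

   For strong duality let p be the primal optimum and e > 0. The pairs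
   (sum_i M_i + Q + Z, sum_i Re tr (eta_i rho_i M_i) - s), with M_i in M_i(E), Q positive
   semidefinite, Z anti-Hermitian and s >= 0, form a convex cone that misses (1, p + e). A hyperplane
   (Y, tau) separating the two makes Y positive semidefinite and tau negative, and H = Y / (-tau) is
   dual feasible with tr H <= p + e.

   Only the fact that each M_i(E) is a convex cone of positive semidefinite operators is used, not
   the value of C_i(E). *)

theory Submission
  imports Defs
begin

section \<open>Positive semidefinite matrices\<close>

lemma hermitian_iff: "hermitian A \<longleftrightarrow> (\<forall>i j. A$j$i = cnj (A$i$j))"
proof -
  have "hermitian A \<longleftrightarrow> (\<forall>i j. cnj (A$j$i) = A$i$j)"
    by (simp add: hermitian_def adj_def vec_eq_iff)
  also have "\<dots> \<longleftrightarrow> (\<forall>i j. A$j$i = cnj (A$i$j))"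
    by (metis complex_cnj_cnj)
  finally show ?thesis .
qed

lemma hermitian_cnj: "hermitian A \<Longrightarrow> cnj (A$i$j) = A$j$i"
  using hermitian_iff by (metis complex_cnj_cnj)

lemma adj_adj [simp]: "adj (adj A) = A"
  by (simp add: adj_def vec_eq_iff)

lemma adj_add: "adj (A + B) = adj A + adj B"
  and adj_diff: "adj (A - B) = adj A - adj B"
  and adj_minus: "adj (- A) = - adj A"
  and adj_scaleR: "adj (c *\<^sub>R A) = c *\<^sub>R adj A"
  and adj_zero [simp]: "adj 0 = 0"
  and adj_mat_1: "adj (mat 1) = mat 1"
  by (simp_all add: adj_def vec_eq_iff mat_def)

lemma adj_sum: "adj (\<Sum>i\<in>S. A i) = (\<Sum>i\<in>S. adj (A i))"
  by (induction S rule: infinite_finite_induct) (simp_all add: adj_add)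

lemma inner_adj: "inner (adj A) B = inner A (adj B)"
proof -
  have "inner (adj A) B = (\<Sum>i\<in>UNIV. \<Sum>j\<in>UNIV. inner (cnj (A$j$i)) (B$i$j))"
    by (simp add: inner_vec_def adj_def)
  also have "\<dots> = (\<Sum>j\<in>UNIV. \<Sum>i\<in>UNIV. inner (A$j$i) (cnj (B$i$j)))"
    by (subst sum.swap) (simp add: inner_complex_def)
  also have "\<dots> = inner A (adj B)" by (simp add: inner_vec_def adj_def)
  finally show ?thesis .
qed

lemma Re_tr_mult: "Re (tr (A ** B)) = inner (adj A) B"
proof -
  have "Re (tr (A ** B)) = (\<Sum>i\<in>UNIV. \<Sum>j\<in>UNIV. Re (A$i$j * B$j$i))"
    by (simp add: tr_def matrix_matrix_mult_def Re_sum)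
  also have "\<dots> = (\<Sum>j\<in>UNIV. \<Sum>i\<in>UNIV. Re (A$i$j * B$j$i))"
    by (rule sum.swap)
  also have "\<dots> = inner (adj A) B"
    by (simp add: inner_vec_def adj_def inner_complex_def)
  finally show ?thesis .
qed

lemma Re_tr_eq_inner_mat_1: "Re (tr A) = inner (mat 1) A"
  using Re_tr_mult[of "mat 1" A] by (simp add: matrix_mul_lid adj_mat_1)

definition quad_form :: "'d::finite op \<Rightarrow> complex^'d \<Rightarrow> complex" where
  "quad_form A v = (\<Sum>i\<in>UNIV. cnj (v$i) * (A *v v)$i)"

lemma quad_form_expand: "quad_form A v = (\<Sum>i\<in>UNIV. \<Sum>j\<in>UNIV. cnj (v$i) * A$i$j * v$j)"
  by (simp add: quad_form_def matrix_vector_mult_def sum_distrib_left mult.assoc)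

lemma quad_form_add: "quad_form (A + B) v = quad_form A v + quad_form B v"
  by (simp add: quad_form_expand ring_distribs sum.distrib)

lemma quad_form_diff: "quad_form (A - B) v = quad_form A v - quad_form B v"
  by (simp add: quad_form_expand ring_distribs sum_subtractf)

lemma quad_form_scaleR: "quad_form (c *\<^sub>R A) v = of_real c * quad_form A v"
  by (simp add: quad_form_expand scaleR_conv_of_real[where 'a=complex] sum_distrib_left mult_ac)

lemma quad_form_axis: "quad_form A (axis k 1) = A$k$k"
proof -
  have "cnj (axis k 1 $ i) = axis k 1 $ i" for i
    by (simp add: axis_def)
  then show ?thesis
    unfolding quad_form_expand by (simp add: axis_def mult_delta_left mult_delta_right)
qed

lemma Im_quad_form_hermitian:
  assumes "hermitian A" shows "Im (quad_form A v) = 0"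
proof -
  note h = hermitian_cnj[OF assms]
  have "cnj (quad_form A v) = (\<Sum>i\<in>UNIV. \<Sum>j\<in>UNIV. v$i * A$j$i * cnj (v$j))"
    unfolding quad_form_expand cnj_sum by (simp only: complex_cnj_mult complex_cnj_cnj h)
  also have "\<dots> = quad_form A v"
    unfolding quad_form_expand by (subst sum.swap) (simp add: mult_ac)
  finally have "Im (cnj (quad_form A v)) = Im (quad_form A v)" by simp
  then show ?thesis by simp
qed

lemma psd_iff_quad_form: "psd A \<longleftrightarrow> hermitian A \<and> (\<forall>v. 0 \<le> Re (quad_form A v))"
  by (auto simp: psd_def quad_form_def[symmetric] Im_quad_form_hermitian)

lemma psd_hermitian: "psd A \<Longrightarrow> hermitian A"
  by (simp add: psd_def)

lemma psd_diag:
  assumes "psd A" shows "Im (A$k$k) = 0" "0 \<le> Re (A$k$k)"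
  using assms Im_quad_form_hermitian[of A "axis k 1"]
  by (auto simp: psd_iff_quad_form quad_form_axis[symmetric])

definition outer :: "complex^'d \<Rightarrow> complex^'d \<Rightarrow> complex^'d^'d" where
  "outer v w = (\<chi> i j. v$i * cnj (w$j))"

lemma quad_form_outer: "quad_form (outer u u) w = of_real ((cmod (\<Sum>i\<in>UNIV. cnj (w$i) * u$i))\<^sup>2)"
proof -
  have "quad_form (outer u u) w = (\<Sum>i\<in>UNIV. cnj (w$i) * u$i) * cnj (\<Sum>i\<in>UNIV. cnj (w$i) * u$i)"
    by (simp add: quad_form_expand outer_def cnj_sum sum_product mult_ac)
  then show ?thesis
    by (simp only: complex_norm_square)
qed

lemma inner_outer: "inner A (outer v v) = Re (quad_form A v)"
  by (simp add: quad_form_expand outer_def inner_vec_def inner_complex_def Re_sum algebra_simps)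

lemma psd_outer: "psd (outer v v)"
  unfolding psd_iff_quad_form hermitian_iff quad_form_outer by (simp add: outer_def)

lemma psd_zero: "psd 0"
  by (simp add: psd_iff_quad_form hermitian_def quad_form_expand)

lemma psd_add: "psd A \<Longrightarrow> psd B \<Longrightarrow> psd (A + B)"
  by (simp add: psd_iff_quad_form hermitian_def adj_add quad_form_add)

lemma psd_scaleR: "psd A \<Longrightarrow> 0 \<le> c \<Longrightarrow> psd (c *\<^sub>R A)"
  by (simp add: psd_iff_quad_form hermitian_def adj_scaleR quad_form_scaleR)

lemma psd_sum: "(\<And>i. i \<in> S \<Longrightarrow> psd (A i)) \<Longrightarrow> psd (\<Sum>i\<in>S. A i)"
  by (induction S rule: infinite_finite_induct) (simp_all add: psd_zero psd_add)

lemma psd_mat_1: "psd (mat 1 :: 'd::finite op)"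
proof -
  have q: "quad_form (mat 1) v = of_real (\<Sum>i\<in>UNIV. (cmod (v$i))\<^sup>2)" for v :: "complex^'d"
    unfolding quad_form_def matrix_vector_mul_lid of_real_sum complex_norm_square
    by (simp add: mult.commute)
  have "0 \<le> Re (quad_form (mat 1) v)" for v :: "complex^'d"
    unfolding q Re_complex_of_real by (simp add: sum_nonneg)
  then show ?thesis
    by (simp add: psd_iff_quad_form hermitian_def adj_mat_1)
qed

lemma quad_form_add_vector:
  "quad_form A (v + u) = quad_form A v + (\<Sum>i\<in>UNIV. cnj (v$i) * (A *v u)$i)
     + (\<Sum>i\<in>UNIV. cnj (u$i) * (A *v v)$i) + quad_form A u"
  by (simp add: quad_form_def matrix_vector_right_distrib ring_distribs sum.distrib)

lemma matrix_vector_mult_axis: "(A *v axis k t) $ i = A$i$k * t"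
  by (simp add: matrix_vector_mult_def axis_def mult_delta_right)

lemma sum_cnj_mult_column:
  assumes "hermitian A" shows "(\<Sum>i\<in>UNIV. cnj (w$i) * A$i$k) = cnj ((A *v w)$k)"
  using assms by (simp add: matrix_vector_mult_def cnj_sum hermitian_cnj mult.commute)

lemma quad_form_add_axis:
  assumes "hermitian A"
  shows "quad_form A (w + axis k t)
    = quad_form A w + cnj t * (A *v w)$k + t * cnj ((A *v w)$k) + cnj t * t * A$k$k"
proof -
  have "(\<Sum>i\<in>UNIV. cnj (w$i) * (A *v axis k t)$i) = (\<Sum>i\<in>UNIV. cnj (w$i) * A$i$k) * t"
    by (simp add: matrix_vector_mult_axis sum_distrib_left sum_distrib_right mult_ac)
  also have "(\<Sum>i\<in>UNIV. cnj (w$i) * A$i$k) = cnj ((A *v w)$k)"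
    using assms by (rule sum_cnj_mult_column)
  moreover have "(\<Sum>i\<in>UNIV. cnj (axis k t $ i) * (A *v w)$i) = cnj t * (A *v w)$k"
    by (simp add: axis_def if_distrib[of cnj] mult_delta_left cong: if_cong)
  moreover have "quad_form A (axis k t) = cnj t * t * A$k$k"
    unfolding quad_form_def matrix_vector_mult_axis
    by (simp add: axis_def if_distrib[of cnj] mult_delta_left mult.assoc[symmetric] cong: if_cong)
  ultimately show ?thesis
    by (simp add: quad_form_add_vector)
qed

lemma psd_row_eq_0:
  fixes A :: "'d::finite op"
  assumes A: "psd A" and Akk: "A$k$k = 0" shows "A$k$j = 0"
proof (rule ccontr)
  define w :: "complex^'d" where "w = axis j 1"
  define \<beta> where "\<beta> = (A *v w)$k"
  assume "A$k$j \<noteq> 0"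
  then have \<beta>: "\<beta> \<noteq> 0"
    by (simp add: \<beta>_def w_def matrix_vector_mult_axis)
  define q where "q = Re (quad_form A w)"
  \<comment> \<open>As A$k$k = 0, the form on w + axis k t is affine in t and can be made negative.\<close>
  define r where "r = (\<bar>q\<bar> + 1) / (2 * (cmod \<beta>)\<^sup>2)"
  define t where "t = - (of_real r * \<beta>)"
  have "cnj t * \<beta> + t * cnj \<beta> = - 2 * of_real r * (\<beta> * cnj \<beta>)"
    by (simp add: t_def algebra_simps)
  also have "\<dots> = - of_real (\<bar>q\<bar> + 1)"
    using \<beta> by (simp add: r_def complex_norm_square[symmetric] field_simps)
  finally have "Re (quad_form A (w + axis k t)) = q - (\<bar>q\<bar> + 1)"
    using A Akk by (simp add: quad_form_add_axis psd_hermitian \<beta>_def[symmetric] q_def add.assoc)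
  moreover have "0 \<le> Re (quad_form A (w + axis k t))"
    using A by (simp add: psd_iff_quad_form)
  ultimately show False by linarith
qed

lemma psd_diff_outer_column:
  fixes A :: "'d::finite op"
  assumes A: "psd A" and c: "0 < Re (A$k$k)"
  defines "u \<equiv> \<chi> i. A$i$k / of_real (sqrt (Re (A$k$k)))"
  shows "psd (A - outer u u)"
proof -
  define c where "c = Re (A$k$k)"
  have Akk: "A$k$k = of_real c"
    using psd_diag(1)[OF A] by (simp add: c_def complex_eq_iff)
  have "c \<noteq> 0"
    using assms(2) by (simp add: c_def)
  have herm: "hermitian A" "hermitian (outer u u)"
    using A psd_outer by (blast intro: psd_hermitian)+
  have "0 \<le> Re (quad_form (A - outer u u) w)" for w
  proof -
    define \<beta> where "\<beta> = (A *v w)$k"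
    define t where "t = - \<beta> / of_real c"
    have "(\<Sum>i\<in>UNIV. cnj (w$i) * u$i) = (\<Sum>i\<in>UNIV. cnj (w$i) * A$i$k) / of_real (sqrt c)"
      by (simp add: u_def c_def sum_divide_distrib)
    also have "\<dots> = cnj \<beta> / of_real (sqrt c)"
      using herm by (simp add: sum_cnj_mult_column \<beta>_def)
    finally have "quad_form (outer u u) w = of_real ((cmod \<beta>)\<^sup>2 / c)"
      using c by (simp add: quad_form_outer norm_divide power_divide c_def)
    also have "\<dots> = \<beta> * cnj \<beta> / of_real c"
      by (simp add: complex_norm_square[symmetric])
    finally have "quad_form (A - outer u u) w = quad_form A w - \<beta> * cnj \<beta> / of_real c"
      by (simp add: quad_form_diff)
    also have "\<dots> = quad_form A (w + axis k t)"
      using \<open>c \<noteq> 0\<close> herm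
      by (simp add: quad_form_add_axis Akk t_def \<beta>_def[symmetric] field_simps)
    finally show ?thesis
      using A by (simp add: psd_iff_quad_form)
  qed
  then show ?thesis
    using herm by (simp add: psd_iff_quad_form hermitian_def adj_diff)
qed

lemma psd_eliminate_row:
  fixes A :: "'d::finite op"
  assumes A: "psd A"
  obtains u where "psd (A - outer u u)" "\<And>j. (A - outer u u)$k$j = 0" "\<And>i. A$i$k = 0 \<Longrightarrow> u$i = 0"
proof (cases "A$k$k = 0")
  case True
  have "outer 0 0 = (0 :: 'd op)"
    by (simp add: outer_def vec_eq_iff)
  then show ?thesis
    by (rule_tac that[of 0]) (simp_all add: A psd_row_eq_0[OF A True])
next
  case False
  define c where "c = Re (A$k$k)"
  have Akk: "A$k$k = of_real c"
    using psd_diag(1)[OF A] by (simp add: c_def complex_eq_iff)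
  have "0 \<le> c"
    using psd_diag(2)[OF A] by (simp add: c_def)
  with False Akk have "0 < c"
    by auto
  define u where "u = (\<chi> i. A$i$k / of_real (sqrt c))"
  show ?thesis
  proof (rule that)
    show "psd (A - outer u u)"
      using psd_diff_outer_column[OF A] \<open>0 < c\<close> unfolding u_def c_def by blast
    show "(A - outer u u)$k$j = 0" for j
    proof -
      have "(outer u u)$k$j = A$k$k * cnj (A$j$k) / of_real (sqrt c * sqrt c)"
        by (simp add: outer_def u_def del: real_sqrt_mult_self)
      also have "\<dots> = A$k$j"
        using \<open>0 < c\<close> hermitian_cnj[OF psd_hermitian[OF A], of j k] by (simp add: Akk)
      finally show ?thesis by simp
    qed
    show "u$i = 0" if "A$i$k = 0" for i
      using that by (simp add: u_def)
  qed
qed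

lemma psd_supported_eq_sum_list_outer:
  fixes A :: "'d::finite op"
  assumes "finite S" "psd A" "\<forall>i j. A$i$j \<noteq> 0 \<longrightarrow> i \<in> S \<and> j \<in> S"
  shows "\<exists>vs. A = (\<Sum>v\<leftarrow>vs. outer v v)"
  using assms
proof (induction S arbitrary: A rule: finite_induct)
  case empty
  then have "A = (\<Sum>v\<leftarrow>[]. outer v v)"
    by (simp add: vec_eq_iff)
  then show ?case ..
next
  case (insert k S)
  obtain u where B: "psd (A - outer u u)" and row: "\<And>j. (A - outer u u)$k$j = 0"
    and u: "\<And>i. A$i$k = 0 \<Longrightarrow> u$i = 0"
    using psd_eliminate_row[OF insert.prems(1), where k = k] by metis
  have "(A - outer u u)$i$j = 0" if "\<not> (i \<in> S \<and> j \<in> S)" for i j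
  proof (cases "i = k \<or> j = k")
    case True
    then show ?thesis
    proof
      assume "i = k"
      then show ?thesis using row[of j] by simp
    next
      assume "j = k"
      then show ?thesis
        using hermitian_cnj[OF psd_hermitian[OF B], of k i] row[of i] by simp
    qed
  next
    case False
    then have "A$i$j = 0" "A$i$k = 0 \<or> A$j$k = 0"
      using insert.prems(2) that by blast+
    then show ?thesis
      using u by (auto simp: outer_def)
  qed
  then obtain vs where "A - outer u u = (\<Sum>v\<leftarrow>vs. outer v v)"
    using insert.IH B by meson
  then have "A = (\<Sum>v\<leftarrow>u # vs. outer v v)"
    by (simp add: algebra_simps)
  then show ?case ..
qed

lemma psd_eq_sum_list_outer:
  fixes A :: "'d::finite op"
  shows "psd A \<Longrightarrow> \<exists>vs. A = (\<Sum>v\<leftarrow>vs. outer v v)"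
  by (rule psd_supported_eq_sum_list_outer[of UNIV]) simp_all

lemma inner_psd_nonneg:
  assumes "psd A" "psd B" shows "0 \<le> inner A B"
proof -
  obtain vs where B: "B = (\<Sum>v\<leftarrow>vs. outer v v)"
    using psd_eq_sum_list_outer[OF assms(2)] by blast
  have "inner A (\<Sum>v\<leftarrow>vs. outer v v) = (\<Sum>v\<leftarrow>vs. Re (quad_form A v))"
    by (induction vs) (simp_all add: inner_add_right inner_outer)
  also have "\<dots> \<ge> 0"
    using assms(1) by (intro sum_list_nonneg) (auto simp: psd_iff_quad_form)
  finally show ?thesis
    by (simp add: B)
qed

lemma psd_iff_inner_psd_nonneg: "psd Y \<longleftrightarrow> hermitian Y \<and> (\<forall>Q. psd Q \<longrightarrow> 0 \<le> inner Y Q)"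
  by (metis inner_outer inner_psd_nonneg psd_hermitian psd_iff_quad_form psd_outer)

lemma hermitian_if_inner_anti_hermitian_nonneg:
  assumes "\<And>Z. adj Z = - Z \<Longrightarrow> 0 \<le> inner Y Z"
  shows "hermitian Y"
proof -
  define W where "W = Y - adj Y"
  have W: "adj W = - W" "adj (- W) = - (- W)"
    by (simp_all add: W_def adj_diff adj_minus)
  have "inner Y W = 0"
    using assms[OF W(1)] assms[OF W(2)] by simp
  moreover have "inner (adj Y) W = - inner Y W"
    by (simp add: inner_adj W)
  ultimately have "inner W W = 0"
    by (simp add: W_def inner_diff_left)
  then show ?thesis
    by (simp add: hermitian_def W_def)
qed

lemma psd_eq_0_if_Re_tr_nonpos:
  fixes Y :: "'d::finite op"
  assumes Y: "psd Y" and tr: "Re (tr Y) \<le> 0"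
  shows "Y = 0"
proof -
  have nonneg: "\<forall>i\<in>UNIV. 0 \<le> Re (Y$i$i)"
    using psd_diag(2)[OF Y] by simp
  have "(\<Sum>i\<in>UNIV. Re (Y$i$i)) = 0"
    using tr nonneg sum_nonneg[of UNIV "\<lambda>i. Re (Y$i$i)"] by (simp add: tr_def Re_sum)
  then have "Re (Y$i$i) = 0" for i
    using nonneg by (simp add: sum_nonneg_eq_0_iff)
  then have "Y$i$i = 0" for i
    using psd_diag(1)[OF Y] by (simp add: complex_eq_iff)
  then show ?thesis
    using psd_row_eq_0[OF Y] by (simp add: vec_eq_iff)
qed

section \<open>Conic duality\<close>

lemma separating_hyperplane_convex_cone:
  fixes S :: "'a::euclidean_space set"
  assumes S: "convex_cone S" and z: "z \<notin> S"
  obtains a where "a \<noteq> 0" "inner a z \<le> 0" "\<And>x. x \<in> S \<Longrightarrow> 0 \<le> inner a x"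
proof -
  have "convex ((\<lambda>x. x - z) ` S)" "0 \<notin> (\<lambda>x. x - z) ` S"
    using S z by (auto simp: convex_cone_def)
  then obtain a where "a \<noteq> 0" and sep: "\<forall>y\<in>(\<lambda>x. x - z) ` S. 0 \<le> inner a y"
    by (blast dest: separating_hyperplane_set_0)
  have a: "inner a z \<le> inner a x" if "x \<in> S" for x
    using sep that by (simp add: inner_diff_right)
  have az: "inner a z \<le> 0"
    using a[of 0] S by (simp add: convex_cone_iff)
  have "0 \<le> inner a x" if x: "x \<in> S" for x
  proof (rule ccontr)
    assume neg: "\<not> 0 \<le> inner a x"
    define c where "c = (1 - inner a z) / - inner a x"
    have "0 \<le> c"
      unfolding c_def using neg az by (intro divide_nonneg_pos) auto
    then have "inner a z \<le> c * inner a x"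
      using a[of "c *\<^sub>R x"] S x by (simp add: convex_cone_iff)
    also have "c * inner a x = inner a z - 1"
      using neg by (simp add: c_def)
    finally show False by simp
  qed
  with \<open>a \<noteq> 0\<close> az that show ?thesis by blast
qed

definition dual_cone :: "'d::finite op set \<Rightarrow> 'd op set" where
  "dual_cone K = {E. hermitian E \<and> (\<forall>F\<in>K. 0 \<le> inner E F)}"

definition primal_values :: "'i set \<Rightarrow> ('i \<Rightarrow> 'd::finite op) \<Rightarrow> ('i \<Rightarrow> 'd op set) \<Rightarrow> real set" where
  "primal_values I W K = {(\<Sum>i\<in>I. inner (W i) (M i)) | Mq M.
     psd Mq \<and> (\<forall>i\<in>I. M i \<in> K i) \<and> Mq + (\<Sum>i\<in>I. M i) = mat 1}"

definition dual_values :: "'i set \<Rightarrow> ('i \<Rightarrow> 'd::finite op) \<Rightarrow> ('i \<Rightarrow> 'd op set) \<Rightarrow> real set" where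
  "dual_values I W K = {Re (tr H) | H. psd H \<and> (\<forall>i\<in>I. H - W i \<in> dual_cone (K i))}"

lemma weak_duality:
  assumes "x \<in> primal_values I W K" "y \<in> dual_values I W K"
  shows "x \<le> y"
proof -
  obtain Mq M where x: "x = (\<Sum>i\<in>I. inner (W i) (M i))" and Mq: "psd Mq"
    and M: "\<forall>i\<in>I. M i \<in> K i" and sum: "Mq + (\<Sum>i\<in>I. M i) = mat 1"
    using assms(1) by (auto simp: primal_values_def)
  obtain H where y: "y = Re (tr H)" and H: "psd H" and HW: "\<forall>i\<in>I. H - W i \<in> dual_cone (K i)"
    using assms(2) by (auto simp: dual_values_def)
  have "x \<le> (\<Sum>i\<in>I. inner H (M i))"
    unfolding x
  proof (rule sum_mono)
    fix i assume "i \<in> I"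
    then have "0 \<le> inner (H - W i) (M i)"
      using HW M by (auto simp: dual_cone_def)
    then show "inner (W i) (M i) \<le> inner H (M i)"
      by (simp add: inner_diff_left)
  qed
  also have "\<dots> = inner H (\<Sum>i\<in>I. M i)"
    by (simp add: inner_sum_right)
  also have "(\<Sum>i\<in>I. M i) = mat 1 - Mq"
    using sum by (metis add_diff_cancel_left')
  also have "inner H (mat 1 - Mq) = Re (tr H) - inner H Mq"
    using psd_hermitian[OF H] by (simp add: inner_diff_right Re_tr_eq_inner_mat_1 inner_commute)
  also have "\<dots> \<le> y"
    using inner_psd_nonneg[OF H Mq] y by simp
  finally show ?thesis .
qed

(* The anti-Hermitian summand Z forces a functional that is nonnegative on this cone to be
   Hermitian; the slack s forces its real component to be nonpositive. *)
definition primal_cone :: "'i set \<Rightarrow> ('i \<Rightarrow> 'd::finite op) \<Rightarrow> ('i \<Rightarrow> 'd op set) \<Rightarrow> ('d op \<times> real) set" where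
  "primal_cone I W K = {((\<Sum>i\<in>I. M i) + Q + Z, (\<Sum>i\<in>I. inner (W i) (M i)) - s) | M Q Z s.
     (\<forall>i\<in>I. M i \<in> K i) \<and> psd Q \<and> adj Z = - Z \<and> 0 \<le> s}"

lemma primal_coneI:
  assumes "\<forall>i\<in>I. M i \<in> K i" "psd Q" "adj Z = - Z" "0 \<le> s"
  shows "((\<Sum>i\<in>I. M i) + Q + Z, (\<Sum>i\<in>I. inner (W i) (M i)) - s) \<in> primal_cone I W K"
  unfolding primal_cone_def using assms by blast

lemma convex_cone_primal_cone:
  assumes "\<And>i. i \<in> I \<Longrightarrow> convex_cone (K i)"
  shows "convex_cone (primal_cone I W K)"
  unfolding convex_cone_iff
proof (intro conjI ballI allI impI)
  have "((\<Sum>i\<in>I. 0) + 0 + 0, (\<Sum>i\<in>I. inner (W i) 0) - 0) \<in> primal_cone I W K"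
    using assms by (intro primal_coneI) (simp_all add: convex_cone_iff psd_zero)
  then show "0 \<in> primal_cone I W K"
    by (simp add: zero_prod_def)
next
  fix x y assume "x \<in> primal_cone I W K" "y \<in> primal_cone I W K"
  then obtain M Q Z s M' Q' Z' s' where
    x: "x = ((\<Sum>i\<in>I. M i) + Q + Z, (\<Sum>i\<in>I. inner (W i) (M i)) - s)"
      "\<forall>i\<in>I. M i \<in> K i" "psd Q" "adj Z = - Z" "0 \<le> s" and
    y: "y = ((\<Sum>i\<in>I. M' i) + Q' + Z', (\<Sum>i\<in>I. inner (W i) (M' i)) - s')"
      "\<forall>i\<in>I. M' i \<in> K i" "psd Q'" "adj Z' = - Z'" "0 \<le> s'"
    unfolding primal_cone_def by blast
  have "x + y = ((\<Sum>i\<in>I. M i + M' i) + (Q + Q') + (Z + Z'),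
      (\<Sum>i\<in>I. inner (W i) (M i + M' i)) - (s + s'))"
    by (simp add: x(1) y(1) sum.distrib inner_add_right algebra_simps)
  also have "\<dots> \<in> primal_cone I W K"
    using x y assms by (intro primal_coneI) (simp_all add: convex_cone_add psd_add adj_add)
  finally show "x + y \<in> primal_cone I W K" .
next
  fix x and c :: real assume "x \<in> primal_cone I W K" "0 \<le> c"
  then obtain M Q Z s where
    x: "x = ((\<Sum>i\<in>I. M i) + Q + Z, (\<Sum>i\<in>I. inner (W i) (M i)) - s)"
      "\<forall>i\<in>I. M i \<in> K i" "psd Q" "adj Z = - Z" "0 \<le> s"
    unfolding primal_cone_def by blast
  have "c *\<^sub>R x = ((\<Sum>i\<in>I. c *\<^sub>R M i) + c *\<^sub>R Q + c *\<^sub>R Z,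
      (\<Sum>i\<in>I. inner (W i) (c *\<^sub>R M i)) - c * s)"
    by (simp add: x(1) scaleR_sum_right sum_distrib_left algebra_simps)
  also have "\<dots> \<in> primal_cone I W K"
    using x assms \<open>0 \<le> c\<close> by (intro primal_coneI) (simp_all add: convex_cone_scaleR psd_scaleR adj_scaleR)
  finally show "c *\<^sub>R x \<in> primal_cone I W K" .
qed

lemma mat_1_not_in_primal_cone:
  assumes K: "\<And>i. i \<in> I \<Longrightarrow> K i \<subseteq> Collect psd"
    and p: "\<And>x. x \<in> primal_values I W K \<Longrightarrow> x \<le> p" and "0 < e"
  shows "(mat 1, p + e) \<notin> primal_cone I W K"
proof
  assume "(mat 1, p + e) \<in> primal_cone I W K"
  then obtain M Q Z s where eq: "(\<Sum>i\<in>I. M i) + Q + Z = mat 1" "(\<Sum>i\<in>I. inner (W i) (M i)) - s = p + e"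
    and M: "\<forall>i\<in>I. M i \<in> K i" and Q: "psd Q" and Z: "adj Z = - Z" and "0 \<le> s"
    unfolding primal_cone_def by auto
  have "hermitian (\<Sum>i\<in>I. M i)"
    unfolding hermitian_def adj_sum
    using M K by (intro sum.cong refl) (metis hermitian_def mem_Collect_eq psd_hermitian subsetD)
  then have "adj Z = Z"
    using eq(1) psd_hermitian[OF Q] adj_mat_1
    by (metis add_diff_cancel_left' adj_add adj_diff hermitian_def)
  with Z have "Z = 0"
    by (simp add: vec_eq_iff complex_eq_iff)
  with eq(1) M Q have "(\<Sum>i\<in>I. inner (W i) (M i)) \<in> primal_values I W K"
    unfolding primal_values_def by (auto simp: add.commute)
  with p eq(2) \<open>0 \<le> s\<close> \<open>0 < e\<close> show False
    by fastforce
qed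

lemma nonneg_on_primal_coneD:
  fixes Y :: "'d::finite op" and \<tau> :: real
  assumes "finite I" and K: "\<forall>i\<in>I. convex_cone (K i)"
    and nonneg: "\<forall>x\<in>primal_cone I W K. 0 \<le> inner (Y, \<tau>) x"
  shows "psd Y" "\<tau> \<le> 0" "\<And>i F. i \<in> I \<Longrightarrow> F \<in> K i \<Longrightarrow> 0 \<le> inner Y F + \<tau> * inner (W i) F"
proof -
  have zero: "\<forall>i\<in>I. (\<lambda>_. 0) i \<in> K i"
    using K by (simp add: convex_cone_iff)
  have mem: "0 \<le> inner Y ((\<Sum>i\<in>I. M i) + Q + Z) + \<tau> * ((\<Sum>i\<in>I. inner (W i) (M i)) - s)"
    if "\<forall>i\<in>I. M i \<in> K i" "psd Q" "adj Z = - Z" "0 \<le> s" for M Q Z s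
    using nonneg primal_coneI[OF that] by fastforce
  have "hermitian Y"
    using mem[OF zero psd_zero _ order_refl] by (intro hermitian_if_inner_anti_hermitian_nonneg) simp
  moreover have "0 \<le> inner Y Q" if "psd Q" for Q
    using mem[OF zero that, of 0 0] by simp
  ultimately show "psd Y"
    using psd_iff_inner_psd_nonneg by blast
  show "\<tau> \<le> 0"
    using mem[OF zero psd_zero, of 0 1] by simp
  show "0 \<le> inner Y F + \<tau> * inner (W i) F" if "i \<in> I" "F \<in> K i" for i F
  proof -
    define M where "M j = (if j = i then F else 0)" for j
    have "\<forall>j\<in>I. M j \<in> K j"
      using that zero by (simp add: M_def)
    moreover have "(\<Sum>j\<in>I. M j) = F" "(\<Sum>j\<in>I. inner (W j) (M j)) = inner (W i) F"
      using that \<open>finite I\<close> by (simp_all add: M_def if_distrib[of "inner _"] cong: if_cong)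
    ultimately show ?thesis
      using mem[of M 0 0 0] by (simp add: psd_zero)
  qed
qed

lemma scaled_dual_value:
  fixes Y :: "'d::finite op"
  assumes Y: "psd Y" and "0 < k" and W: "\<And>i. i \<in> I \<Longrightarrow> hermitian (W i)"
    and YW: "\<And>i F. i \<in> I \<Longrightarrow> F \<in> K i \<Longrightarrow> k * inner (W i) F \<le> inner Y F"
  shows "Re (tr Y) / k \<in> dual_values I W K"
proof -
  define H where "H = (1 / k) *\<^sub>R Y"
  have "psd H"
    using Y \<open>0 < k\<close> by (simp add: H_def psd_scaleR)
  moreover have "H - W i \<in> dual_cone (K i)" if "i \<in> I" for i
  proof -
    have "hermitian (H - W i)"
      using psd_hermitian[OF Y] W[OF that] by (simp add: H_def hermitian_def adj_diff adj_scaleR)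
    moreover have "0 \<le> inner (H - W i) F" if "F \<in> K i" for F
    proof -
      have "inner (H - W i) F = (inner Y F - k * inner (W i) F) / k"
        using \<open>0 < k\<close> by (simp add: H_def inner_diff_left field_simps)
      then show ?thesis
        using YW[OF \<open>i \<in> I\<close> that] \<open>0 < k\<close> by simp
    qed
    ultimately show ?thesis
      by (simp add: dual_cone_def)
  qed
  moreover have "Re (tr H) = Re (tr Y) / k"
    by (simp add: H_def Re_tr_eq_inner_mat_1)
  ultimately show ?thesis
    unfolding dual_values_def by (intro CollectI exI[of _ H]) auto
qed

lemma strong_duality:
  fixes W :: "'i \<Rightarrow> 'd::finite op"
  assumes "finite I" and K: "\<And>i. i \<in> I \<Longrightarrow> convex_cone (K i)" "\<And>i. i \<in> I \<Longrightarrow> K i \<subseteq> Collect psd"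
    and W: "\<And>i. i \<in> I \<Longrightarrow> hermitian (W i)"
    and p: "\<And>x. x \<in> primal_values I W K \<Longrightarrow> x \<le> p" and "0 < e"
  shows "\<exists>y\<in>dual_values I W K. y \<le> p + e"
proof -
  obtain a where "a \<noteq> 0" and a1: "inner a (mat 1, p + e) \<le> 0"
    and a: "\<forall>x\<in>primal_cone I W K. 0 \<le> inner a x"
    using separating_hyperplane_convex_cone[OF convex_cone_primal_cone mat_1_not_in_primal_cone]
      K p \<open>0 < e\<close> by metis
  obtain Y \<tau> where a_eq: "a = (Y, \<tau>)"
    by fastforce
  have "\<forall>i\<in>I. convex_cone (K i)"
    using K(1) by blast
  note Y\<tau> = nonneg_on_primal_coneD[OF \<open>finite I\<close> this a[unfolded a_eq]]
  have tr: "Re (tr Y) \<le> - \<tau> * (p + e)"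
    using a1 psd_hermitian[OF Y\<tau>(1)] by (simp add: a_eq Re_tr_eq_inner_mat_1 inner_commute)
  have "\<tau> \<noteq> 0"
  proof
    assume "\<tau> = 0"
    with tr have "Y = 0"
      using psd_eq_0_if_Re_tr_nonpos[OF Y\<tau>(1)] by simp
    with \<open>\<tau> = 0\<close> \<open>a \<noteq> 0\<close> show False
      by (simp add: a_eq zero_prod_def)
  qed
  with Y\<tau>(2) have "0 < - \<tau>"
    by simp
  have "- \<tau> * inner (W i) F \<le> inner Y F" if "i \<in> I" "F \<in> K i" for i F
    using Y\<tau>(3)[OF that] by simp
  then have "Re (tr Y) / - \<tau> \<in> dual_values I W K"
    using W by (intro scaled_dual_value[OF Y\<tau>(1) \<open>0 < - \<tau>\<close>]) auto
  moreover have "Re (tr Y) / - \<tau> \<le> p + e"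
    using pos_divide_le_eq[OF \<open>0 < - \<tau>\<close>] tr by (metis mult.commute)
  ultimately show ?thesis ..
qed

lemma zero_in_primal_values:
  assumes "\<And>i. i \<in> I \<Longrightarrow> 0 \<in> K i"
  shows "0 \<in> primal_values I W K"
proof -
  have "(\<Sum>i\<in>I. inner (W i) ((\<lambda>_. 0) i)) \<in> primal_values I W K"
    unfolding primal_values_def using assms psd_mat_1 by fastforce
  then show ?thesis
    by simp
qed

lemma psd_in_dual_cone: "K \<subseteq> Collect psd \<Longrightarrow> psd E \<Longrightarrow> E \<in> dual_cone K"
  by (auto simp: dual_cone_def psd_hermitian inner_psd_nonneg)

lemma Re_tr_sum_in_dual_values:
  assumes "finite I" and K: "\<And>i. i \<in> I \<Longrightarrow> K i \<subseteq> Collect psd" and W: "\<And>i. i \<in> I \<Longrightarrow> psd (W i)"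
  shows "Re (tr (\<Sum>i\<in>I. W i)) \<in> dual_values I W K"
proof -
  have "(\<Sum>j\<in>I. W j) - W i \<in> dual_cone (K i)" if "i \<in> I" for i
  proof -
    have "(\<Sum>j\<in>I. W j) - W i = (\<Sum>j\<in>I - {i}. W j)"
      using that \<open>finite I\<close> by (simp add: sum_diff1)
    then show ?thesis
      using W by (auto intro!: psd_in_dual_cone[OF K[OF that]] psd_sum)
  qed
  then show ?thesis
    unfolding dual_values_def using W by (blast intro: psd_sum)
qed

lemma Sup_primal_values_eq_Inf_dual_values:
  fixes W :: "'i \<Rightarrow> 'd::finite op"
  assumes "finite I" and K: "\<And>i. i \<in> I \<Longrightarrow> convex_cone (K i)" "\<And>i. i \<in> I \<Longrightarrow> K i \<subseteq> Collect psd"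
    and W: "\<And>i. i \<in> I \<Longrightarrow> psd (W i)"
  shows "Sup (primal_values I W K) = Inf (dual_values I W K)"
proof -
  let ?P = "primal_values I W K" and ?D = "dual_values I W K"
  have P: "?P \<noteq> {}"
    using K(1) zero_in_primal_values[of I K W] by (auto simp: convex_cone_iff)
  have "Re (tr (\<Sum>i\<in>I. W i)) \<in> ?D"
    using assms by (intro Re_tr_sum_in_dual_values) auto
  then have D: "?D \<noteq> {}"
    by blast
  have weak: "\<And>x y. x \<in> ?P \<Longrightarrow> y \<in> ?D \<Longrightarrow> x \<le> y"
    by (rule weak_duality)
  have "bdd_above ?P" "bdd_below ?D"
    using P D weak by (meson bdd_above_def bdd_below_def ex_in_conv)+
  show ?thesis
  proof (rule antisym)
    show "Sup ?P \<le> Inf ?D"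
      using P D weak by (meson cInf_greatest cSup_least)
    show "Inf ?D \<le> Sup ?P"
    proof (rule field_le_epsilon)
      fix e :: real assume "0 < e"
      have "\<And>x. x \<in> ?P \<Longrightarrow> x \<le> Sup ?P"
        using \<open>bdd_above ?P\<close> by (simp add: cSup_upper)
      then have "\<exists>y\<in>?D. y \<le> Sup ?P + e"
        using K W \<open>0 < e\<close> by (intro strong_duality[OF \<open>finite I\<close>]) (auto intro: psd_hermitian)
      then show "Inf ?D \<le> Sup ?P + e"
        using \<open>bdd_below ?D\<close> cInf_lower order_trans by blast
    qed
  qed
qed

section \<open>The ensemble programs\<close>

lemma convex_cone_psd_tr_annihilator: "convex_cone {E. psd E \<and> tr (X ** E) = 0}"
proof -
  have "tr (X ** (A + B)) = tr (X ** A) + tr (X ** B)" for A B :: "'a::finite op"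
    by (simp add: tr_def matrix_add_ldistrib sum.distrib)
  moreover have "tr (X ** (c *\<^sub>R A)) = of_real c * tr (X ** A)" for c and A :: "'a op"
    by (simp add: tr_def matrix_matrix_mult_def scaleR_conv_of_real[where 'a=complex]
        sum_distrib_left mult_ac)
  ultimately show ?thesis
    by (simp add: convex_cone_iff psd_zero psd_add psd_scaleR tr_def)
qed

lemma convex_cone_Mset: "convex_cone (Mset n \<eta> \<rho> i)"
  unfolding Mset_def by (rule convex_cone_psd_tr_annihilator)

lemma Mset_subset_psd: "Mset n \<eta> \<rho> i \<subseteq> Collect psd"
  by (auto simp: Mset_def)

lemma Mdual_eq_dual_cone: "Mdual n \<eta> \<rho> i = dual_cone (Mset n \<eta> \<rho> i)"
  by (auto simp: Mdual_def dual_cone_def Re_tr_mult hermitian_def)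

lemma pG_eq_Sup_primal_values:
  fixes \<rho> :: "nat \<Rightarrow> 'd::finite op"
  assumes "\<And>i. i \<in> {1..n} \<Longrightarrow> hermitian (\<rho> i)"
  shows "pG n \<eta> \<rho> = Sup (primal_values {1..n} (\<lambda>i. \<eta> i *\<^sub>R \<rho> i) (Mset n \<eta> \<rho>))"
proof -
  have objective: "(\<Sum>i=1..n. \<eta> i * Re (tr (\<rho> i ** M i))) = (\<Sum>i=1..n. inner (\<eta> i *\<^sub>R \<rho> i) (M i))"
    for M :: "nat \<Rightarrow> 'd op"
    using assms by (intro sum.cong refl) (simp add: Re_tr_mult hermitian_def)
  have feasible: "measurement n Mq M \<and> (\<forall>i\<in>{1..n}. M i \<in> Mset n \<eta> \<rho> i) \<longleftrightarrow>
      psd Mq \<and> (\<forall>i\<in>{1..n}. M i \<in> Mset n \<eta> \<rho> i) \<and> Mq + (\<Sum>i=1..n. M i) = mat 1"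
    for Mq and M :: "nat \<Rightarrow> 'd op"
    by (auto simp: measurement_def Mset_def)
  show ?thesis
    unfolding pG_def primal_values_def objective feasible ..
qed

lemma qG_eq_Inf_dual_values:
  "qG n \<eta> \<rho> = Inf (dual_values {1..n} (\<lambda>i. \<eta> i *\<^sub>R \<rho> i) (Mset n \<eta> \<rho>))"
  unfolding qG_def dual_values_def Mdual_eq_dual_cone ..

theorem theorem2:
  fixes n :: nat and \<eta> :: "nat \<Rightarrow> real" and \<rho> :: "nat \<Rightarrow> complex^'d::finite^'d"
  assumes "ensemble n \<eta> \<rho>"
  shows "pG n \<eta> \<rho> = qG n \<eta> \<rho>"
proof -
  have \<rho>: "psd (\<rho> i)" and \<eta>: "0 < \<eta> i" if "i \<in> {1..n}" for i
    using assms that by (auto simp: ensemble_def density_def)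
  have "pG n \<eta> \<rho> = Sup (primal_values {1..n} (\<lambda>i. \<eta> i *\<^sub>R \<rho> i) (Mset n \<eta> \<rho>))"
    using \<rho> by (intro pG_eq_Sup_primal_values psd_hermitian)
  also have "\<dots> = Inf (dual_values {1..n} (\<lambda>i. \<eta> i *\<^sub>R \<rho> i) (Mset n \<eta> \<rho>))"
    using \<rho> \<eta> by (intro Sup_primal_values_eq_Inf_dual_values convex_cone_Mset Mset_subset_psd
        psd_scaleR less_imp_le) auto
  also have "\<dots> = qG n \<eta> \<rho>"
    by (rule qG_eq_Inf_dual_values[symmetric])
  finally show ?thesis .
qed

end
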